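(* Suppose $c_1\ge-1$, $c_2\ge-1$, $c_3>\bar c_3(c_1,c_2)$. Let $U^+$ be the real analytic solution, on some interval $(-1,-1+\delta)$, of $(1-x^2)U'+2xU+\frac12U^2=P_c(x)$ given by a power series $\tau_2(c_1)+\sum_{n\ge1}a_n(1+x)^n$ (so $U^+(-1)=\tau_2(c_1)$). Then $U^+$ extends to a solution of the equation in $(-1,1)$ and $U^+(1)=\tau_2'(c_2)$. Similarly, let $U^-$ be the real analytic solution on some interval $(1-\delta,1)$ given by a power series $\tau_1'(c_2)+\sum_{n\ge1}b_n(1-x)^n$ (so $U^-(1)=\tau_1'(c_2)$). Then $U^-$ extends to a solution in $(-1,1)$ and $U^-(-1)=\tau_1(c_1)$. Moreover $U^-<U^+$ in $(-1,1)$.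
   Context: $P_c(x):=c_1(1-x)+c_2(1+x)+c_3(1-x^2)$ for $c=(c_1,c_2,c_3)$; $\bar c_3(c_1,c_2):=-\frac12(\sqrt{1+c_1}+\sqrt{1+c_2})(\sqrt{1+c_1}+\sqrt{1+c_2}+2)$. $\tau_1(c_1):=2-2\sqrt{1+c_1}$, $\tau_2(c_1):=2+2\sqrt{1+c_1}$, $\tau_1'(c_2):=-2-2\sqrt{1+c_2}$, $\tau_2'(c_2):=-2+2\sqrt{1+c_2}$. For $c_1\ge-1$ there is a unique power-series (real analytic) local solution near $x=-1$ with value $\tau_2(c_1)$ at $-1$, and for $c_2\ge-1$ a unique one near $x=1$ with value $\tau_1'(c_2)$ at $1$. Boundary values $U(\pm1)$ denote one-sided limits. *)

theory Defs
  imports "HOL-Analysis.Analysis"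
begin

definition Pc :: "real \<Rightarrow> real \<Rightarrow> real \<Rightarrow> real \<Rightarrow> real" where
  "Pc c1 c2 c3 x = c1 * (1 - x) + c2 * (1 + x) + c3 * (1 - x^2)"

definition c3bar :: "real \<Rightarrow> real \<Rightarrow> real" where
  "c3bar c1 c2 = - (1/2) * (sqrt (1 + c1) + sqrt (1 + c2)) * (sqrt (1 + c1) + sqrt (1 + c2) + 2)"

definition tau1 :: "real \<Rightarrow> real" where "tau1 c1 = 2 - 2 * sqrt (1 + c1)"
definition tau2 :: "real \<Rightarrow> real" where "tau2 c1 = 2 + 2 * sqrt (1 + c1)"
definition tau1' :: "real \<Rightarrow> real" where "tau1' c2 = -2 - 2 * sqrt (1 + c2)"
definition tau2' :: "real \<Rightarrow> real" where "tau2' c2 = -2 + 2 * sqrt (1 + c2)"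

definition solves_on :: "real \<Rightarrow> real \<Rightarrow> real \<Rightarrow> (real \<Rightarrow> real) \<Rightarrow> real set \<Rightarrow> bool" where
  "solves_on c1 c2 c3 U S \<longleftrightarrow>
     (\<forall>x\<in>S. \<exists>D. (U has_real_derivative D) (at x) \<and>
        (1 - x^2) * D + 2 * x * U x + (U x)^2 / 2 = Pc c1 c2 c3 x)"

end

theory Submission
  imports Defs "HOL-Real_Asymp.Real_Asymp"
begin

text \<open>
  With \<open>z = (1 + x) / 2\<close>, the substitution
  \<open>U = L + 4 (1 - z) z F'(z) / F(z)\<close>, where \<open>L\<close> is the explicit linear solution for the critical
  value \<open>c\<^sub>3 = c3bar c\<^sub>1 c\<^sub>2\<close>, turns the Riccati equation into Gauss's hypergeometric equation
  for \<open>F\<close>. For \<open>c\<^sub>3 > c3bar c\<^sub>1 c\<^sub>2\<close> the hypergeometric series has positive coefficients and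
  radius 1, so this gives a solution \<open>U\<^sup>+\<close> on all of \<open>(-1, 1)\<close> with \<open>U\<^sup>+ > L\<close> and
  \<open>U\<^sup>+(-1) = \<tau>\<^sub>2(c\<^sub>1)\<close>; a Gronwall argument identifies it with the power series solution.
  Near \<open>x = 1\<close> a bounded solution must converge to a zero of the right-hand side, i.e. to
  \<open>\<tau>\<^sub>1'(c\<^sub>2)\<close> or \<open>\<tau>\<^sub>2'(c\<^sub>2)\<close>; the limit \<open>\<tau>\<^sub>1'(c\<^sub>2) = L(1)\<close> is excluded because
  \<open>U\<^sup>+ - L\<close> is positive and eventually nondecreasing. The solution \<open>U\<^sup>-\<close> is obtained by the
  symmetry \<open>x \<mapsto> -x\<close>, \<open>U \<mapsto> -U\<close>, \<open>c\<^sub>1 \<leftrightarrow> c\<^sub>2\<close>, which also gives \<open>U\<^sup>- < L < U\<^sup>+\<close>.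
\<close>

section \<open>Power series and the Euler operator\<close>

lemma conv_radius_mult_of_nat_power:
  fixes f :: "nat \<Rightarrow> 'a :: {banach, real_normed_div_algebra}"
  shows "conv_radius (\<lambda>n. of_nat n ^ k * f n) = conv_radius f"
proof -
  have "limsup (\<lambda>n. ereal (root n (norm (of_nat n ^ k * f n))))
      = limsup (\<lambda>n. ereal (root n (real n) ^ k) * ereal (root n (norm (f n))))"
    by (intro Limsup_eq eventually_mono[OF eventually_gt_at_top[of "0::nat"]])
       (auto simp: norm_mult norm_power real_root_mult real_root_power)
  also have "\<dots> = ereal 1 * limsup (\<lambda>n. ereal (root n (norm (f n))))"
    using LIMSEQ_root by (intro ereal_limsup_lim_mult tendsto_ereal) (auto intro: tendsto_eq_intros)
  finally show ?thesis by (simp add: conv_radius_def)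
qed

text \<open>\<open>euler_series k g\<close> is \<open>\<theta>\<^sup>k\<close> applied to \<open>\<Sum>n. g n * z ^ n\<close>, where \<open>\<theta> = z d/dz\<close>.\<close>

definition euler_series :: "nat \<Rightarrow> (nat \<Rightarrow> real) \<Rightarrow> real \<Rightarrow> real" where
  "euler_series k g z = (\<Sum>n. real n ^ k * g n * z ^ n)"

lemma summable_euler_series:
  assumes "ereal \<bar>z\<bar> < conv_radius g"
  shows "summable (\<lambda>n. real n ^ k * g n * z ^ n)"
  using summable_in_conv_radius[of z "\<lambda>n. real n ^ k * g n"] assms
  by (simp add: conv_radius_mult_of_nat_power)

lemma euler_series_has_derivative:
  assumes z: "\<bar>z\<bar> < K" and K: "ereal K \<le> conv_radius g"
  shows "\<exists>D. (euler_series k g has_real_derivative D) (at z) \<and> z * D = euler_series (Suc k) g z"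
proof -
  define h where "h n = real n ^ k * g n" for n
  have sum_h: "summable (\<lambda>n. h n * w ^ n)" if "\<bar>w\<bar> < K" for w
  proof -
    have "ereal \<bar>w\<bar> < ereal K" using that by simp
    then have "ereal \<bar>w\<bar> < conv_radius g" using K by (rule order.strict_trans2)
    then show ?thesis unfolding h_def by (rule summable_euler_series)
  qed
  have "(euler_series k g has_real_derivative (\<Sum>n. diffs h n * z ^ n)) (at z)"
    using termdiffs_strong'[of K h z] sum_h z unfolding euler_series_def[abs_def] h_def by simp
  moreover have "(\<lambda>n. z * (diffs h n * z ^ n)) sums (z * (\<Sum>n. diffs h n * z ^ n))"
    using termdiff_converges[of z K h] sum_h z by (intro sums_mult summable_sums) auto
  then have "(\<lambda>n. real (Suc n) * h (Suc n) * z ^ Suc n) sums (z * (\<Sum>n. diffs h n * z ^ n))"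
    by (simp add: diffs_def algebra_simps)
  then have "(\<lambda>n. real n * h n * z ^ n) sums (z * (\<Sum>n. diffs h n * z ^ n))"
    by (subst (asm) sums_Suc_iff) simp
  then have "z * (\<Sum>n. diffs h n * z ^ n) = euler_series (Suc k) g z"
    by (simp add: euler_series_def h_def sums_iff algebra_simps)
  ultimately show ?thesis by blast
qed

lemma euler_series_ge_term:
  assumes "\<And>n. g n \<ge> 0" and "z \<ge> 0" and "ereal z < conv_radius g"
  shows "real m ^ k * g m * z ^ m \<le> euler_series k g z"
proof -
  have "(\<Sum>n\<in>{m}. real n ^ k * g n * z ^ n) \<le> euler_series k g z"
    unfolding euler_series_def using assms summable_euler_series[of z g k]
    by (intro sum_le_suminf) auto
  then show ?thesis by simp
qed

section \<open>The hypergeometric series\<close>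

text \<open>Coefficients of \<open>\<^sub>2F\<^sub>1(\<alpha>, \<beta>; c; z)\<close> with \<open>\<alpha> + \<beta> = p\<close> and \<open>\<alpha> \<beta> = r\<close>, since
  \<open>(n + \<alpha>) (n + \<beta>) = n\<^sup>2 + p n + r\<close>.\<close>

fun hyp_coeff :: "real \<Rightarrow> real \<Rightarrow> real \<Rightarrow> nat \<Rightarrow> real" where
  "hyp_coeff p r c 0 = 1"
| "hyp_coeff p r c (Suc n) =
     hyp_coeff p r c n * (real n ^ 2 + p * real n + r) / ((real n + c) * (real n + 1))"

locale hyp_params =
  fixes p r c :: real
  assumes p: "p \<ge> 0" and r: "r > 0" and c: "c > 0"
begin

abbreviation "h \<equiv> hyp_coeff p r c"

lemma hyp_coeff_pos: "h n > 0"
proof (induction n)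
  case (Suc n)
  have "real n ^ 2 + p * real n + r > 0" using p r by (intro add_nonneg_pos) auto
  moreover have "(real n + c) * (real n + 1) > 0" using c by (intro mult_pos_pos) auto
  ultimately show ?case using Suc by simp
qed simp

lemma conv_radius_hyp_coeff: "conv_radius h = 1"
proof (rule conv_radius_ratio_limit_nonzero)
  have "(\<lambda>n. (real n + c) * (real n + 1) / (real n ^ 2 + p * real n + r)) \<longlonglongrightarrow> 1"
    by real_asymp
  then show "(\<lambda>n. norm (h n) / norm (h (Suc n))) \<longlonglongrightarrow> 1"
  proof (rule Lim_transform_eventually)
    show "\<forall>\<^sub>F n in sequentially. (real n + c) * (real n + 1) / (real n ^ 2 + p * real n + r)
        = norm (h n) / norm (h (Suc n))"
    proof (rule always_eventually, intro allI)
      fix n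
      define N D where "N = real n ^ 2 + p * real n + r" and "D = (real n + c) * (real n + 1)"
      have "N > 0" unfolding N_def using p r by (intro add_nonneg_pos) auto
      moreover have "D > 0" unfolding D_def using c by (intro mult_pos_pos) auto
      moreover have "h (Suc n) = h n * N / D" by (simp add: N_def D_def)
      ultimately show "D / N = norm (h n) / norm (h (Suc n))"
        using hyp_coeff_pos[of n] hyp_coeff_pos[of "Suc n"] by (simp del: hyp_coeff.simps add: field_simps)
    qed
  qed
qed auto

abbreviation "F \<equiv> euler_series 0 h"
abbreviation "A \<equiv> euler_series 1 h"
abbreviation "B \<equiv> euler_series 2 h"

lemma euler_series_hyp_coeff_has_derivative:
  "\<bar>z\<bar> < 1 \<Longrightarrow> \<exists>D. (euler_series k h has_real_derivative D) (at z) \<and> z * D = euler_series (Suc k) h z"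
  by (rule euler_series_has_derivative[where K=1]) (simp_all add: conv_radius_hyp_coeff)

lemma euler_series_at_0: "euler_series k h 0 = 0 ^ k"
  unfolding euler_series_def by (subst suminf_finite[of "{0}"]) auto

lemma hyp_ge_1: "0 \<le> z \<Longrightarrow> z < 1 \<Longrightarrow> F z \<ge> 1"
  using euler_series_ge_term[of h z 0 0, OF less_imp_le[OF hyp_coeff_pos]]
  by (simp add: conv_radius_hyp_coeff)

lemma hyp_theta_pos: "0 < z \<Longrightarrow> z < 1 \<Longrightarrow> A z > 0"
  using euler_series_ge_term[of h z 1 1, OF less_imp_le[OF hyp_coeff_pos]] hyp_coeff_pos[of 1]
  by (auto simp: conv_radius_hyp_coeff intro: order_less_le_trans[OF mult_pos_pos]
      simp del: hyp_coeff.simps)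

lemma hyp_coeff_Suc: "(real n + 1) * (real n + c) * h (Suc n) = (real n ^ 2 + p * real n + r) * h n"
proof -
  have "(real n + c) * (real n + 1) > 0" using c by (intro mult_pos_pos) auto
  then show ?thesis by (simp add: field_simps)
qed

lemma hypergeometric_equation:
  assumes "\<bar>z\<bar> < 1"
  shows "B z + (c - 1) * A z = z * (B z + p * A z + r * F z)"
proof -
  have sum: "summable (\<lambda>n. real n ^ k * h n * z ^ n)" for k
    using assms by (intro summable_euler_series) (simp add: conv_radius_hyp_coeff)
  define t where "t n = real n ^ 2 * h n * z ^ n + (c - 1) * (real n ^ 1 * h n * z ^ n)" for n
  have "t sums (B z + (c - 1) * A z)"
    unfolding t_def euler_series_def by (intro sums_add sums_mult summable_sums sum)
  then have "(\<lambda>n. t (Suc n)) sums (B z + (c - 1) * A z)"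
    by (subst sums_Suc_iff) (simp add: t_def)
  moreover have "t (Suc n) = z * (real n ^ 2 * h n * z ^ n + p * (real n ^ 1 * h n * z ^ n)
      + r * (real n ^ 0 * h n * z ^ n))" for n
  proof -
    have "t (Suc n) = (real n + 1) * (real n + c) * h (Suc n) * z ^ Suc n"
      unfolding t_def by (simp del: hyp_coeff.simps add: algebra_simps power2_eq_square)
    also have "\<dots> = (real n ^ 2 + p * real n + r) * h n * z ^ Suc n" by (simp only: hyp_coeff_Suc)
    finally show ?thesis by (simp add: algebra_simps)
  qed
  moreover have "(\<lambda>n. z * (real n ^ 2 * h n * z ^ n + p * (real n ^ 1 * h n * z ^ n)
      + r * (real n ^ 0 * h n * z ^ n))) sums (z * (B z + p * A z + r * F z))"
    unfolding euler_series_def by (intro sums_add sums_mult summable_sums sum)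
  ultimately show ?thesis by (simp add: sums_unique2)
qed

end

lemma one_minus_square_bounds:
  fixes t :: real
  assumes "-1 < t" "t < 1"
  shows "0 < 1 - t ^ 2" "1 - t ^ 2 \<le> 2 * (1 - t)"
proof -
  have eq: "1 - t ^ 2 = (1 - t) * (1 + t)" by (simp add: power2_eq_square algebra_simps)
  show "0 < 1 - t ^ 2" unfolding eq using assms by simp
  have "(1 - t) * (1 + t) \<le> (1 - t) * 2" using assms by (intro mult_left_mono) auto
  then show "1 - t ^ 2 \<le> 2 * (1 - t)" unfolding eq by simp
qed

lemma power_series_linear_bound_at_0:
  fixes a :: "nat \<Rightarrow> real"
  assumes "\<delta> > 0" and sums: "\<And>t. 0 < t \<Longrightarrow> t < \<delta> \<Longrightarrow> (\<lambda>n. a n * t ^ n) sums f t"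
  shows "\<exists>\<epsilon>>0. \<exists>C. \<forall>t. 0 < t \<and> t < \<epsilon> \<longrightarrow> \<bar>f t - a 0\<bar> \<le> C * t"
proof -
  define t0 where "t0 = \<delta> / 2"
  have t0: "0 < t0" "t0 < \<delta>" using assms(1) by (auto simp: t0_def)
  then have "summable (\<lambda>n. a n * t0 ^ n)" using sums sums_summable by blast
  then have "Bseq (\<lambda>n. a n * t0 ^ n)"
    by (blast intro: convergent_imp_Bseq convergentI summable_LIMSEQ_zero)
  then obtain M where "M > 0" and M: "\<And>n. \<bar>a n * t0 ^ n\<bar> \<le> M" by (auto simp: Bseq_def)
  have "\<bar>f t - a 0\<bar> \<le> 2 * M / t0 * t" if t: "0 < t" "t < t0 / 2" for t
  proof -
    define q where "q = t / t0"
    have q: "0 < q" "q < 1 / 2" using t t0 by (auto simp: q_def field_simps)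
    have "(\<lambda>n. a n * t ^ n) sums f t" using sums t t0 by auto
    then have tail: "(\<lambda>n. a (Suc n) * t ^ Suc n) sums (f t - a 0)" by (subst sums_Suc_iff) simp
    have geom: "(\<lambda>n. M * q * q ^ n) sums (M * q / (1 - q))"
      using sums_mult[OF geometric_sums, of q "M * q"] q by (simp add: field_simps)
    have "norm (a (Suc n) * t ^ Suc n) \<le> M * q * q ^ n" for n
    proof -
      have "\<bar>a (Suc n) * t ^ Suc n\<bar> = \<bar>a (Suc n) * t0 ^ Suc n\<bar> * q ^ Suc n"
        using t0 t by (simp add: q_def power_divide abs_mult)
      also have "\<dots> \<le> M * q ^ Suc n" by (rule mult_right_mono[OF M]) (use q in simp)
      finally show ?thesis by simp
    qed
    then have "norm (\<Sum>n. a (Suc n) * t ^ Suc n) \<le> (\<Sum>n. M * q * q ^ n)"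
      using geom by (intro norm_suminf_le) (auto simp: sums_iff)
    then have "\<bar>f t - a 0\<bar> \<le> M * q / (1 - q)" using tail geom by (simp add: sums_iff)
    also have "\<dots> \<le> 2 * M * q" using q \<open>M > 0\<close> by (simp add: field_simps)
    finally show ?thesis using t0 by (simp add: q_def)
  qed
  then have "\<forall>t. 0 < t \<and> t < t0 / 2 \<longrightarrow> \<bar>f t - a 0\<bar> \<le> 2 * M / t0 * t" by blast
  then show ?thesis using t0 by (intro exI[of _ "t0 / 2"] conjI exI[of _ "2 * M / t0"]) simp_all
qed

lemma deriv_pos_at_zeros_no_downcrossing:
  fixes f f' :: "real \<Rightarrow> real"
  assumes der: "\<And>t. x \<le> t \<Longrightarrow> t \<le> y \<Longrightarrow> (f has_real_derivative f' t) (at t)"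
    and pos: "\<And>t. x \<le> t \<Longrightarrow> t \<le> y \<Longrightarrow> f t = 0 \<Longrightarrow> f' t > 0"
    and "x \<le> y" "f x \<ge> 0"
  shows "\<not> f y < 0"
proof
  assume fy: "f y < 0"
  have cont: "continuous_on {x..y} f"
    using der by (intro continuous_at_imp_continuous_on ballI DERIV_isCont) auto
  define Z where "Z = {x..y} \<inter> f -` {0..}"
  have "closed Z" unfolding Z_def by (rule continuous_closed_preimage) (use cont in auto)
  moreover have "bounded Z" unfolding Z_def by (rule bounded_Int) auto
  ultimately have "compact Z" by (simp add: compact_eq_bounded_closed)
  moreover have "x \<in> Z" using assms by (auto simp: Z_def)
  ultimately obtain z where "z \<in> Z" and z_max: "\<And>t. t \<in> Z \<Longrightarrow> t \<le> z"
    using compact_attains_sup[of Z] by blast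
  then have z: "x \<le> z" "z \<le> y" "f z \<ge> 0" by (auto simp: Z_def)
  have neg: "f t < 0" if "z < t" "t \<le> y" for t
    using z_max[of t] that z by (force simp: Z_def)
  have "z < y" using z fy by (cases "z = y") auto
  obtain t where t: "z \<le> t" "t \<le> y" "f t = 0"
    using IVT2'[of f y 0 z] z fy continuous_on_subset[OF cont, of "{z..y}"] by auto
  then have "t = z" using neg[of t] by force
  with t have "f' z > 0" using pos z by auto
  then obtain d where d: "d > 0" "\<And>h. 0 < h \<Longrightarrow> h < d \<Longrightarrow> f z < f (z + h)"
    using DERIV_pos_inc_right[OF der] z by blast
  define h where "h = min (d / 2) (y - z)"
  have "0 < h" "h < d" "z + h \<le> y" using d \<open>z < y\<close> by (auto simp: h_def)
  then show False using d(2)[of h] neg[of "z + h"] t \<open>t = z\<close> by auto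
qed

lemma deriv_pos_at_zeros_stays_pos:
  fixes f f' :: "real \<Rightarrow> real"
  assumes der: "\<And>t. x \<le> t \<Longrightarrow> t \<le> y \<Longrightarrow> (f has_real_derivative f' t) (at t)"
    and pos: "\<And>t. x \<le> t \<Longrightarrow> t \<le> y \<Longrightarrow> f t = 0 \<Longrightarrow> f' t > 0"
    and "x < y" "f x \<ge> 0"
  shows "f y > 0"
proof (rule ccontr)
  assume "\<not> f y > 0"
  moreover have "\<not> f y < 0"
    by (rule deriv_pos_at_zeros_no_downcrossing[of x y f f']) (use assms in auto)
  ultimately have "f y = 0" by simp
  then have "f' y > 0" using pos assms by auto
  then obtain d where d: "d > 0" "\<And>h. 0 < h \<Longrightarrow> h < d \<Longrightarrow> f (y - h) < f y"
    using DERIV_pos_inc_left[OF der[of y]] assms by auto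
  define h where "h = min (d / 2) (y - x)"
  have "0 < h" "h < d" "x \<le> y - h" using d assms by (auto simp: h_def)
  then have "f (y - h) < 0" using d(2)[of h] \<open>f y = 0\<close> by simp
  moreover have "\<not> f (y - h) < 0"
    by (rule deriv_pos_at_zeros_no_downcrossing[of x "y - h" f f'])
      (use assms \<open>x \<le> y - h\<close> \<open>0 < h\<close> in auto)
  ultimately show False by simp
qed

lemma eventually_sign_at_left_of_deriv_pos_at_zeros:
  fixes f f' :: "real \<Rightarrow> real"
  assumes "a < b"
    and der: "\<And>t. a < t \<Longrightarrow> t < b \<Longrightarrow> (f has_real_derivative f' t) (at t)"
    and pos: "\<And>t. a < t \<Longrightarrow> t < b \<Longrightarrow> f t = 0 \<Longrightarrow> f' t > 0"
  shows "eventually (\<lambda>t. f t > 0) (at_left b) \<or> eventually (\<lambda>t. f t < 0) (at_left b)"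
proof (cases "\<exists>y. a < y \<and> y < b \<and> f y \<ge> 0")
  case True
  then obtain y where y: "a < y" "y < b" "f y \<ge> 0" by blast
  have "f t > 0" if "y < t" "t < b" for t
    by (rule deriv_pos_at_zeros_stays_pos[of y t f f']) (use y that der pos in auto)
  then have "eventually (\<lambda>t. f t > 0) (at_left b)"
    unfolding eventually_at_left_field using y by blast
  then show ?thesis ..
next
  case False
  then have "eventually (\<lambda>t. f t < 0) (at_left b)"
    unfolding eventually_at_left_field using \<open>a < b\<close> by (auto intro!: exI[of _ a])
  then show ?thesis ..
qed

lemma tendsto_of_eventually_sides:
  fixes f :: "'a \<Rightarrow> real"
  assumes "F \<noteq> bot" and bounded: "eventually (\<lambda>x. m \<le> f x \<and> f x \<le> M) F" and "finite Z"
    and sides: "\<And>v. v \<notin> Z \<Longrightarrow> eventually (\<lambda>x. v < f x) F \<or> eventually (\<lambda>x. f x < v) F"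
  shows "\<exists>l. (f \<longlongrightarrow> l) F"
proof
  define A where "A = {v. eventually (\<lambda>x. v < f x) F}"
  have "m - 1 \<in> A" unfolding A_def mem_Collect_eq by (rule eventually_mono[OF bounded]) auto
  then have A_ne: "A \<noteq> {}" by auto
  have "v < M" if "v \<in> A" for v
  proof -
    have "eventually (\<lambda>x. v < f x) F" using that by (simp add: A_def)
    then have "eventually (\<lambda>x. v < f x \<and> f x \<le> M) F"
      using bounded by eventually_elim auto
    then show ?thesis using eventually_happens'[OF \<open>F \<noteq> bot\<close>] by force
  qed
  then have A_bdd: "bdd_above A" by (meson bdd_aboveI less_imp_le)
  show "(f \<longlongrightarrow> Sup A) F"
  proof (rule order_tendstoI)
    fix a assume "a < Sup A"
    then obtain v where "v \<in> A" "a < v" using less_cSup_iff[OF A_ne A_bdd] by auto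
    then show "eventually (\<lambda>x. a < f x) F" unfolding A_def by (auto elim: eventually_mono)
  next
    fix a assume "Sup A < a"
    then have "infinite {Sup A<..<a}" by simp
    then obtain v where v: "Sup A < v" "v < a" "v \<notin> Z"
      using \<open>finite Z\<close> by (metis Diff_iff finite_subset greaterThanLessThan_iff subsetI)
    then have "v \<notin> A" using cSup_upper[OF _ A_bdd] by force
    then have "eventually (\<lambda>x. f x < v) F" using sides[OF v(3)] by (simp add: A_def)
    then show "eventually (\<lambda>x. f x < a) F" using v by (auto elim: eventually_mono)
  qed
qed

lemma not_tendsto_at_left_1_of_deriv_ge_log_rate:
  fixes f f' :: "real \<Rightarrow> real"
  assumes "b < 1" "k > 0"
    and der: "\<And>t. b < t \<Longrightarrow> t < 1 \<Longrightarrow> (f has_real_derivative f' t) (at t)"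
    and rate: "\<And>t. b < t \<Longrightarrow> t < 1 \<Longrightarrow> f' t \<ge> k / (1 - t)"
  shows "\<not> (f \<longlongrightarrow> l) (at_left 1)"
proof
  assume lim: "(f \<longlongrightarrow> l) (at_left 1)"
  define x0 where "x0 = (b + 1) / 2"
  have x0: "b < x0" "x0 < 1" using \<open>b < 1\<close> by (auto simp: x0_def)
  define H where "H t = f t + k * ln (1 - t)" for t
  have H_mono: "H x0 \<le> H x" if "x0 \<le> x" "x < 1" for x
  proof (rule DERIV_nonneg_imp_increasing_open[OF that(1)])
    fix t assume t: "x0 < t" "t < x"
    then have "(H has_real_derivative f' t + k * (- 1 / (1 - t))) (at t)"
      unfolding H_def using x0 that
      by (auto intro!: derivative_eq_intros der simp: field_simps)
    moreover have "f' t + k * (- 1 / (1 - t)) \<ge> 0" using rate[of t] t x0 that by auto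
    ultimately show "\<exists>y. (H has_real_derivative y) (at t) \<and> 0 \<le> y" by blast
  next
    show "continuous_on {x0..x} H"
      unfolding H_def using x0 that
      by (intro continuous_intros continuous_at_imp_continuous_on ballI DERIV_isCont[OF der]) auto
  qed
  have "filterlim (\<lambda>t. H x0 - k * ln (1 - t)) at_top (at_left 1)"
    using \<open>k > 0\<close> by real_asymp
  moreover have "eventually (\<lambda>t. H x0 - k * ln (1 - t) \<le> f t) (at_left 1)"
    unfolding eventually_at_left_field
  proof (intro exI[of _ x0] conjI allI impI)
    fix t assume "x0 < t" "t < 1"
    then show "H x0 - k * ln (1 - t) \<le> f t" using H_mono[of t] by (simp add: H_def)
  qed (rule x0(2))
  ultimately have "filterlim f at_top (at_left 1)" by (rule filterlim_at_top_mono)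
  then have "eventually (\<lambda>t. f t > l + 1) (at_left 1)" by (simp add: filterlim_at_top_dense)
  moreover have "eventually (\<lambda>t. f t < l + 1) (at_left 1)" using lim by (rule order_tendstoD) simp
  ultimately have "eventually (\<lambda>t. False) (at_left (1::real))" by eventually_elim auto
  then show False by simp
qed

lemma deriv_nonneg_pos_not_tendsto_0:
  fixes f f' :: "real \<Rightarrow> real"
  assumes "x0 < b"
    and der: "\<And>t. x0 \<le> t \<Longrightarrow> t < b \<Longrightarrow> (f has_real_derivative f' t) (at t)"
    and nonneg: "\<And>t. x0 < t \<Longrightarrow> t < b \<Longrightarrow> f' t \<ge> 0" and "f x0 > 0"
  shows "\<not> (f \<longlongrightarrow> 0) (at_left b)"
proof
  assume lim: "(f \<longlongrightarrow> 0) (at_left b)"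
  have "f x0 \<le> f x" if "x0 \<le> x" "x < b" for x
  proof (rule DERIV_nonneg_imp_increasing_open[OF that(1)])
    fix t assume "x0 < t" "t < x"
    then show "\<exists>y. (f has_real_derivative y) (at t) \<and> 0 \<le> y"
      using der[of t] nonneg[of t] that by auto
  next
    show "continuous_on {x0..x} f"
      using that by (intro continuous_at_imp_continuous_on ballI DERIV_isCont[OF der]) auto
  qed
  then have "eventually (\<lambda>x. f x0 \<le> f x) (at_left b)"
    unfolding eventually_at_left_field using \<open>x0 < b\<close> by (intro exI[of _ x0]) auto
  with lim have "f x0 \<le> 0" by (intro tendsto_lowerbound) auto
  with \<open>f x0 > 0\<close> show False by simp
qed

lemma vanishes_of_deriv_le_linear_at_right:
  fixes f f' :: "real \<Rightarrow> real"
  assumes der: "\<And>t. a < t \<Longrightarrow> t < b \<Longrightarrow> (f has_real_derivative f' t) (at t)"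
    and growth: "\<And>t. a < t \<Longrightarrow> t < b \<Longrightarrow> f' t \<le> K * f t"
    and nonneg: "\<And>t. a < t \<Longrightarrow> t < b \<Longrightarrow> f t \<ge> 0"
    and lim: "(f \<longlongrightarrow> 0) (at_right a)"
    and x: "a < x" "x < b"
  shows "f x = 0"
proof -
  define g where "g t = f t * exp (- K * t)" for t
  have g_anti: "g x \<le> g y" if "a < y" "y \<le> x" for y
  proof (rule DERIV_nonpos_imp_decreasing_open[OF that(2)])
    fix t assume t: "y < t" "t < x"
    then have "(g has_real_derivative (f' t - K * f t) * exp (- K * t)) (at t)"
      unfolding g_def using that x by (auto intro!: derivative_eq_intros der simp: algebra_simps)
    moreover have "(f' t - K * f t) * exp (- K * t) \<le> 0"
      using growth[of t] t that x by (simp add: mult_nonpos_nonneg)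
    ultimately show "\<exists>y. (g has_real_derivative y) (at t) \<and> y \<le> 0" by blast
  next
    show "continuous_on {y..x} g"
      unfolding g_def using that x
      by (intro continuous_intros continuous_at_imp_continuous_on ballI DERIV_isCont[OF der]) auto
  qed
  have "(g \<longlongrightarrow> 0 * exp (- K * a)) (at_right a)"
    unfolding g_def by (intro tendsto_intros lim)
  moreover have "eventually (\<lambda>y. g x \<le> g y) (at_right a)"
    unfolding eventually_at_right_field using x g_anti by (intro exI[of _ x]) auto
  ultimately have "g x \<le> 0" by (intro tendsto_lowerbound) auto
  then show ?thesis using nonneg[OF x] by (simp add: g_def mult_le_0_iff)
qed

section \<open>The Riccati equation\<close>

definition riccati_rhs :: "real \<Rightarrow> real \<Rightarrow> real \<Rightarrow> real \<Rightarrow> real \<Rightarrow> real" where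
  "riccati_rhs c1 c2 c3 x u = Pc c1 c2 c3 x - 2 * x * u - u ^ 2 / 2"

lemma riccati_rhs_diff:
  "riccati_rhs c1 c2 c3 x u - riccati_rhs c1 c2 c3 x v = - (u - v) * (2 * x + (u + v) / 2)"
  by (simp add: riccati_rhs_def power2_eq_square field_simps)

lemma solves_on_subset: "solves_on c1 c2 c3 U S \<Longrightarrow> T \<subseteq> S \<Longrightarrow> solves_on c1 c2 c3 U T"
  unfolding solves_on_def by blast

lemma solves_on_has_derivative:
  assumes "solves_on c1 c2 c3 U S" "x \<in> S" "\<bar>x\<bar> < 1"
  shows "(U has_real_derivative riccati_rhs c1 c2 c3 x (U x) / (1 - x ^ 2)) (at x)"
proof -
  obtain D where D: "(U has_real_derivative D) (at x)"
    "(1 - x ^ 2) * D + 2 * x * U x + (U x) ^ 2 / 2 = Pc c1 c2 c3 x"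
    using assms unfolding solves_on_def by blast
  have "x ^ 2 < 1" using assms(3) by (simp add: abs_square_less_1)
  then have "D = riccati_rhs c1 c2 c3 x (U x) / (1 - x ^ 2)"
    using D(2) by (simp add: riccati_rhs_def field_simps)
  then show ?thesis using D(1) by simp
qed

lemma solves_on_reflect:
  assumes "solves_on c1 c2 c3 U S" "\<And>y. y \<in> T \<Longrightarrow> - y \<in> S"
  shows "solves_on c2 c1 c3 (\<lambda>y. - U (- y)) T"
  unfolding solves_on_def
proof
  fix y assume y: "y \<in> T"
  obtain D where D: "(U has_real_derivative D) (at (- y))"
    "(1 - (- y) ^ 2) * D + 2 * (- y) * U (- y) + (U (- y)) ^ 2 / 2 = Pc c1 c2 c3 (- y)"
    using assms y unfolding solves_on_def by blast
  have "((\<lambda>y. - U (- y)) has_real_derivative D) (at y)"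
    using DERIV_minus[OF DERIV_chain2[where g = uminus, OF D(1) DERIV_minus[OF DERIV_ident]]]
    by simp
  moreover have "(1 - y ^ 2) * D + 2 * y * (- U (- y)) + (- U (- y)) ^ 2 / 2 = Pc c2 c1 c3 y"
    using D(2) by (simp add: Pc_def algebra_simps)
  ultimately show "\<exists>D. ((\<lambda>y. - U (- y)) has_real_derivative D) (at y) \<and>
      (1 - y ^ 2) * D + 2 * y * (- U (- y)) + (- U (- y)) ^ 2 / 2 = Pc c2 c1 c3 y" by blast
qed

lemma solves_on_unique_from_left:
  assumes "-1 \<le> a" "b \<le> 1"
    and sol1: "solves_on c1 c2 c3 U1 {a<..<b}" and sol2: "solves_on c1 c2 c3 U2 {a<..<b}"
    and lim: "((\<lambda>x. U1 x - U2 x) \<longlongrightarrow> 0) (at_right a)"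
    and bound: "\<And>x. a < x \<Longrightarrow> x < b \<Longrightarrow> 2 * x + (U1 x + U2 x) / 2 \<ge> - C * (1 - x ^ 2)"
    and x: "a < x" "x < b"
  shows "U1 x = U2 x"
proof -
  define w where "w t = U1 t - U2 t" for t
  define w' where "w' t = (riccati_rhs c1 c2 c3 t (U1 t) - riccati_rhs c1 c2 c3 t (U2 t)) / (1 - t ^ 2)" for t
  have "w x ^ 2 = 0"
  proof (rule vanishes_of_deriv_le_linear_at_right[where f = "\<lambda>t. w t ^ 2" and f' = "\<lambda>t. 2 * w t * w' t"
        and K = "2 * C"])
    fix t assume t: "a < t" "t < b"
    then have "\<bar>t\<bar> < 1" "1 - t ^ 2 > 0" using one_minus_square_bounds[of t] assms(1,2) by auto
    show "((\<lambda>t. w t ^ 2) has_real_derivative 2 * w t * w' t) (at t)"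
      unfolding w_def w'_def using t \<open>\<bar>t\<bar> < 1\<close>
      by (auto intro!: derivative_eq_intros solves_on_has_derivative[OF sol1] solves_on_has_derivative[OF sol2]
          simp: diff_divide_distrib)
    define q where "q = (2 * t + (U1 t + U2 t) / 2) / (1 - t ^ 2)"
    have "q \<ge> - C" using bound[OF t] \<open>1 - t ^ 2 > 0\<close> by (simp add: q_def le_divide_eq)
    have "2 * w t * w' t = 2 * w t ^ 2 * (- q)"
      using \<open>1 - t ^ 2 > 0\<close> unfolding q_def w'_def riccati_rhs_diff w_def
      by (simp add: field_simps power2_eq_square)
    also have "\<dots> \<le> 2 * w t ^ 2 * C" using \<open>q \<ge> - C\<close> by (intro mult_left_mono) auto
    finally show "2 * w t * w' t \<le> 2 * C * w t ^ 2" by (simp add: ac_simps)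
  next
    show "((\<lambda>t. w t ^ 2) \<longlongrightarrow> 0) (at_right a)" using tendsto_power[OF lim, of 2] by (simp add: w_def)
  qed (use x in auto)
  then show ?thesis by (simp add: w_def)
qed

lemma solves_on_unique_interior:
  assumes "-1 < a" "b < 1"
    and sol1: "solves_on c1 c2 c3 U1 {a..b}" and sol2: "solves_on c1 c2 c3 U2 {a..b}"
    and "U1 a = U2 a" and x: "a < x" "x < b"
  shows "U1 x = U2 x"
proof -
  have t1: "\<bar>t\<bar> < 1" "1 - t ^ 2 > 0" if "t \<in> {a..b}" for t
    using that assms(1,2) one_minus_square_bounds[of t] by auto
  have cont1: "isCont U1 t" and cont2: "isCont U2 t" if "t \<in> {a..b}" for t
    using solves_on_has_derivative[OF sol1 that t1(1)[OF that]]
      solves_on_has_derivative[OF sol2 that t1(1)[OF that]] by (auto intro: DERIV_isCont)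
  define \<phi> where "\<phi> t = (2 * t + (U1 t + U2 t) / 2) / (1 - t ^ 2)" for t
  have "continuous_on {a..b} \<phi>"
    unfolding \<phi>_def using t1(2)
    by (intro continuous_intros continuous_at_imp_continuous_on ballI cont1 cont2) force+
  then obtain xm where xm: "\<And>t. t \<in> {a..b} \<Longrightarrow> \<phi> xm \<le> \<phi> t"
    using continuous_attains_inf[of "{a..b}" \<phi>] x by fastforce
  show ?thesis
  proof (rule solves_on_unique_from_left[of a b c1 c2 c3 U1 U2 "- \<phi> xm"])
    show "solves_on c1 c2 c3 U1 {a<..<b}" "solves_on c1 c2 c3 U2 {a<..<b}"
      by (auto intro!: solves_on_subset[OF sol1] solves_on_subset[OF sol2])
    have "isCont (\<lambda>t. U1 t - U2 t) a" using cont1 cont2 x by (intro continuous_intros) auto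
    then show "((\<lambda>t. U1 t - U2 t) \<longlongrightarrow> 0) (at_right a)"
      using \<open>U1 a = U2 a\<close> by (simp add: isCont_def filterlim_at_split)
    fix t assume "a < t" "t < b"
    then show "2 * t + (U1 t + U2 t) / 2 \<ge> - (- \<phi> xm) * (1 - t ^ 2)"
      using xm[of t] t1(2)[of t] by (simp add: \<phi>_def le_divide_eq)
  qed (use assms in auto)
qed

lemma riccati_rhs_roots_at_1:
  assumes "c2 \<ge> -1" "riccati_rhs c1 c2 c3 1 v = 0"
  shows "v = tau1' c2 \<or> v = tau2' c2"
proof -
  have "(v + 2) ^ 2 = 4 + 4 * c2"
    using assms(2) by (simp add: riccati_rhs_def Pc_def algebra_simps power2_eq_square)
  also have "\<dots> = (2 * sqrt (1 + c2)) ^ 2" using assms(1) by (simp add: power_mult_distrib)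
  finally have "v + 2 = 2 * sqrt (1 + c2) \<or> v + 2 = - (2 * sqrt (1 + c2))"
    using power2_eq_iff by blast
  then show ?thesis by (auto simp: tau1'_def tau2'_def)
qed

lemma riccati_eventually_side_at_1:
  assumes "-1 \<le> x0" "x0 < 1" and sol: "solves_on c1 c2 c3 U {x0<..<1}"
    and nonroot: "riccati_rhs c1 c2 c3 1 v \<noteq> 0"
  shows "eventually (\<lambda>x. v < U x) (at_left 1) \<or> eventually (\<lambda>x. U x < v) (at_left 1)"
proof -
  define \<sigma> where "\<sigma> = sgn (riccati_rhs c1 c2 c3 1 v)"
  have \<sigma>: "\<sigma> = 1 \<or> \<sigma> = -1" using nonroot by (simp add: \<sigma>_def sgn_real_def)
  have "((\<lambda>x. \<sigma> * riccati_rhs c1 c2 c3 x v) \<longlongrightarrow> \<sigma> * riccati_rhs c1 c2 c3 1 v) (at_left 1)"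
    unfolding riccati_rhs_def Pc_def by (intro tendsto_intros)
  moreover have "\<sigma> * riccati_rhs c1 c2 c3 1 v > 0"
    using nonroot unfolding \<sigma>_def by (simp add: sgn_real_def)
  ultimately have "eventually (\<lambda>t. \<sigma> * riccati_rhs c1 c2 c3 t v > 0) (at_left 1)"
    by (rule order_tendstoD(1))
  then obtain b where "b < 1" and b: "\<And>t. b < t \<Longrightarrow> t < 1 \<Longrightarrow> \<sigma> * riccati_rhs c1 c2 c3 t v > 0"
    unfolding eventually_at_left_field by blast
  have "eventually (\<lambda>t. \<sigma> * (U t - v) > 0) (at_left 1) \<or> eventually (\<lambda>t. \<sigma> * (U t - v) < 0) (at_left 1)"
  proof (rule eventually_sign_at_left_of_deriv_pos_at_zeros)
    show "max b x0 < 1" using \<open>b < 1\<close> \<open>x0 < 1\<close> by simp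
    fix t assume t: "max b x0 < t" "t < 1"
    have "\<bar>t\<bar> < 1" using t assms(1) by auto
    then have "1 - t ^ 2 > 0" by (simp add: abs_square_less_1)
    have "(U has_real_derivative riccati_rhs c1 c2 c3 t (U t) / (1 - t ^ 2)) (at t)"
      using solves_on_has_derivative[OF sol] t \<open>\<bar>t\<bar> < 1\<close> by auto
    then show "((\<lambda>t. \<sigma> * (U t - v)) has_real_derivative \<sigma> * (riccati_rhs c1 c2 c3 t (U t) / (1 - t ^ 2))) (at t)"
      by (auto intro!: derivative_eq_intros)
    assume "\<sigma> * (U t - v) = 0"
    then have "U t = v" using \<sigma> by auto
    moreover have "\<sigma> * riccati_rhs c1 c2 c3 t v > 0" using b t by simp
    ultimately show "\<sigma> * (riccati_rhs c1 c2 c3 t (U t) / (1 - t ^ 2)) > 0"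
      using \<open>1 - t ^ 2 > 0\<close> by simp
  qed
  with \<sigma> show ?thesis by (elim disjE) (simp_all add: disj_commute)
qed

lemma riccati_limit_is_root_at_1:
  assumes "-1 \<le> x0" "x0 < 1" and sol: "solves_on c1 c2 c3 U {x0<..<1}"
    and lim: "(U \<longlongrightarrow> l) (at_left 1)"
  shows "riccati_rhs c1 c2 c3 1 l = 0"
proof (rule ccontr)
  assume nonroot: "riccati_rhs c1 c2 c3 1 l \<noteq> 0"
  define \<sigma> where "\<sigma> = sgn (riccati_rhs c1 c2 c3 1 l)"
  define g where "g = \<bar>riccati_rhs c1 c2 c3 1 l\<bar> / 2"
  have "g > 0" using nonroot by (simp add: g_def)
  have "((\<lambda>x. \<sigma> * riccati_rhs c1 c2 c3 x (U x)) \<longlongrightarrow> \<sigma> * riccati_rhs c1 c2 c3 1 l) (at_left 1)"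
    unfolding riccati_rhs_def Pc_def by (intro tendsto_intros lim) auto
  moreover have "\<sigma> * riccati_rhs c1 c2 c3 1 l > g"
    using nonroot by (auto simp: \<sigma>_def g_def sgn_real_def)
  ultimately have "eventually (\<lambda>t. \<sigma> * riccati_rhs c1 c2 c3 t (U t) > g) (at_left 1)"
    by (rule order_tendstoD(1))
  then obtain b where "b < 1" and b: "\<And>t. b < t \<Longrightarrow> t < 1 \<Longrightarrow> \<sigma> * riccati_rhs c1 c2 c3 t (U t) > g"
    unfolding eventually_at_left_field by blast
  txt \<open>Near 1, \<open>\<sigma> U' \<ge> g / (1 - x\<^sup>2)\<close> is not integrable, so \<open>\<sigma> U\<close> cannot converge.\<close>
  have "\<not> ((\<lambda>t. \<sigma> * U t) \<longlongrightarrow> \<sigma> * l) (at_left 1)"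
  proof (rule not_tendsto_at_left_1_of_deriv_ge_log_rate)
    show "max b x0 < 1" "g / 2 > 0" using \<open>b < 1\<close> \<open>x0 < 1\<close> \<open>g > 0\<close> by auto
    fix t assume t: "max b x0 < t" "t < 1"
    then have "\<bar>t\<bar> < 1" "1 - t ^ 2 > 0" "1 - t ^ 2 \<le> 2 * (1 - t)"
      using one_minus_square_bounds[of t] assms(1) by auto
    show "((\<lambda>t. \<sigma> * U t) has_real_derivative \<sigma> * (riccati_rhs c1 c2 c3 t (U t) / (1 - t ^ 2))) (at t)"
      using solves_on_has_derivative[OF sol _ \<open>\<bar>t\<bar> < 1\<close>] t by (auto intro!: derivative_eq_intros)
    have "g / (2 * (1 - t)) \<le> g / (1 - t ^ 2)"
      using \<open>g > 0\<close> \<open>1 - t ^ 2 > 0\<close> \<open>1 - t ^ 2 \<le> 2 * (1 - t)\<close> by (intro divide_left_mono) auto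
    then have "g / 2 / (1 - t) \<le> g / (1 - t ^ 2)" by simp
    also have "\<dots> \<le> \<sigma> * riccati_rhs c1 c2 c3 t (U t) / (1 - t ^ 2)"
      using b[of t] t \<open>1 - t ^ 2 > 0\<close> by (intro divide_right_mono) auto
    finally show "g / 2 / (1 - t) \<le> \<sigma> * (riccati_rhs c1 c2 c3 t (U t) / (1 - t ^ 2))" by simp
  qed
  then show False using lim by (auto intro: tendsto_intros)
qed

lemma riccati_tendsto_root_at_1:
  assumes "c2 \<ge> -1" "-1 \<le> x0" "x0 < 1" and sol: "solves_on c1 c2 c3 U {x0<..<1}"
    and bounded: "\<And>x. x0 < x \<Longrightarrow> x < 1 \<Longrightarrow> m \<le> U x \<and> U x \<le> M"
  shows "\<exists>l. (U \<longlongrightarrow> l) (at_left 1) \<and> (l = tau1' c2 \<or> l = tau2' c2)"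
proof -
  have "finite {v. riccati_rhs c1 c2 c3 1 v = 0}"
    using riccati_rhs_roots_at_1[OF assms(1)] by (auto intro: finite_subset[of _ "{tau1' c2, tau2' c2}"])
  moreover have "eventually (\<lambda>x. m \<le> U x \<and> U x \<le> M) (at_left 1)"
    unfolding eventually_at_left_field using assms(3) bounded by blast
  ultimately obtain l where lim: "(U \<longlongrightarrow> l) (at_left 1)"
    using tendsto_of_eventually_sides[of "at_left (1::real)" m U M]
      riccati_eventually_side_at_1[OF assms(2,3) sol] by auto
  then show ?thesis
    using riccati_rhs_roots_at_1[OF assms(1) riccati_limit_is_root_at_1[OF assms(2,3) sol lim]] by blast
qed

lemma riccati_rhs_neg_above:
  "\<exists>K. \<forall>x u. -1 < x \<longrightarrow> x < 1 \<longrightarrow> K \<le> u \<longrightarrow> riccati_rhs c1 c2 c3 x u < 0"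
proof -
  define P where "P = 2 * \<bar>c1\<bar> + 2 * \<bar>c2\<bar> + \<bar>c3\<bar>"
  have "riccati_rhs c1 c2 c3 x u < 0" if x: "-1 < x" "x < 1" and u: "5 + 2 * P \<le> u" for x u
  proof -
    have "\<bar>1 - x\<bar> \<le> 2" "\<bar>1 + x\<bar> \<le> 2" "\<bar>1 - x ^ 2\<bar> \<le> 1"
      using x one_minus_square_bounds[of x] by auto
    then have "\<bar>c1\<bar> * \<bar>1 - x\<bar> \<le> \<bar>c1\<bar> * 2" "\<bar>c2\<bar> * \<bar>1 + x\<bar> \<le> \<bar>c2\<bar> * 2"
      "\<bar>c3\<bar> * \<bar>1 - x ^ 2\<bar> \<le> \<bar>c3\<bar> * 1"
      by (intro mult_left_mono; simp)+
    then have "Pc c1 c2 c3 x \<le> P"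
      unfolding Pc_def P_def using abs_ge_self[of "c1 * (1 - x)"] abs_ge_self[of "c2 * (1 + x)"]
        abs_ge_self[of "c3 * (1 - x ^ 2)"] by (simp add: abs_mult)
    moreover have "- u \<le> x * u" using mult_right_mono[of "-1" x u] x u by (simp add: P_def)
    moreover have "5 * u \<le> u * u" using u by (intro mult_right_mono) (auto simp: P_def)
    ultimately show ?thesis using u unfolding riccati_rhs_def power2_eq_square mult.assoc by linarith
  qed
  then show ?thesis by blast
qed

lemma solves_on_bounded_above:
  assumes sol: "solves_on c1 c2 c3 U {-1<..<1}" and "-1 < x0" "x0 < 1"
  shows "\<exists>M. \<forall>y. x0 < y \<longrightarrow> y < 1 \<longrightarrow> U y < M"
proof -
  obtain K where K: "\<And>x u. -1 < x \<Longrightarrow> x < 1 \<Longrightarrow> K \<le> u \<Longrightarrow> riccati_rhs c1 c2 c3 x u < 0"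
    using riccati_rhs_neg_above by blast
  define M where "M = max K (U x0)"
  have "M - U y > 0" if y: "x0 < y" "y < 1" for y
  proof (rule deriv_pos_at_zeros_stays_pos[of x0 y "\<lambda>t. M - U t"
        "\<lambda>t. - (riccati_rhs c1 c2 c3 t (U t) / (1 - t ^ 2))"])
    fix t assume t: "x0 \<le> t" "t \<le> y"
    then have "-1 < t" "t < 1" using y assms(2) by auto
    then have "\<bar>t\<bar> < 1" "1 - t ^ 2 > 0" using one_minus_square_bounds[of t] by auto
    show "((\<lambda>t. M - U t) has_real_derivative - (riccati_rhs c1 c2 c3 t (U t) / (1 - t ^ 2))) (at t)"
      using solves_on_has_derivative[OF sol _ \<open>\<bar>t\<bar> < 1\<close>] \<open>-1 < t\<close> \<open>t < 1\<close>
      by (auto intro!: derivative_eq_intros)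
    assume "M - U t = 0"
    then have "riccati_rhs c1 c2 c3 t (U t) < 0" using K[OF \<open>-1 < t\<close> \<open>t < 1\<close>] by (simp add: M_def)
    then show "- (riccati_rhs c1 c2 c3 t (U t) / (1 - t ^ 2)) > 0"
      using \<open>1 - t ^ 2 > 0\<close> by (simp add: divide_neg_pos)
  qed (use y in \<open>auto simp: M_def\<close>)
  then show ?thesis by auto
qed

section \<open>The solution through \<open>\<tau>\<^sub>2(c\<^sub>1)\<close> at \<open>-1\<close>\<close>

definition riccati_line :: "real \<Rightarrow> real \<Rightarrow> real \<Rightarrow> real" where
  "riccati_line c1 c2 x = (sqrt (1 + c1) - sqrt (1 + c2)) - (2 + sqrt (1 + c1) + sqrt (1 + c2)) * x"

lemma riccati_line_at_1: "riccati_line c1 c2 1 = tau1' c2"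
  and riccati_line_at_minus_1: "riccati_line c1 c2 (-1) = tau2 c1"
  by (simp_all add: riccati_line_def tau1'_def tau2_def)

lemma riccati_line_reflect: "- riccati_line c2 c1 (- x) = riccati_line c1 c2 x"
  by (simp add: riccati_line_def algebra_simps)

lemma riccati_line_tendsto_at_1: "(riccati_line c1 c2 \<longlongrightarrow> tau1' c2) (at_left 1)"
  using riccati_line_at_1[of c1 c2] unfolding riccati_line_def[abs_def]
  by (auto intro!: tendsto_eq_intros)

text \<open>For a solution \<open>U\<close>, the left-hand side is \<open>(1 - x\<^sup>2) (U - L)'\<close>.\<close>

lemma riccati_rhs_above_line:
  assumes "c1 \<ge> -1" "c2 \<ge> -1"
  shows "riccati_rhs c1 c2 c3 x u + (1 - x ^ 2) * (2 + sqrt (1 + c1) + sqrt (1 + c2))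
    = (c3 - c3bar c1 c2) * (1 - x ^ 2)
      - (u - riccati_line c1 c2 x) * (2 * x + (u + riccati_line c1 c2 x) / 2)"
proof -
  define s1 s2 where "s1 = sqrt (1 + c1)" and "s2 = sqrt (1 + c2)"
  have e: "c1 = s1 ^ 2 - 1" "c2 = s2 ^ 2 - 1" using assms by (auto simp: s1_def s2_def)
  show ?thesis
    unfolding riccati_rhs_def riccati_line_def c3bar_def Pc_def s1_def[symmetric] s2_def[symmetric]
    by (simp add: e field_simps power2_eq_square)
qed

definition riccati_hyp_coeff :: "real \<Rightarrow> real \<Rightarrow> real \<Rightarrow> nat \<Rightarrow> real" where
  "riccati_hyp_coeff c1 c2 c3 =
     hyp_coeff (1 + sqrt (1 + c1) + sqrt (1 + c2)) ((c3 - c3bar c1 c2) / 2) (1 + sqrt (1 + c1))"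

text \<open>This is \<open>L + 4 (1 - z) \<theta>F / F\<close> with \<open>z = (1 + x) / 2\<close>, where \<open>F\<close> is the hypergeometric series
  with \<open>\<alpha> + \<beta> = 1 + s\<^sub>1 + s\<^sub>2\<close>, \<open>\<alpha> \<beta> = (c\<^sub>3 - c3bar c\<^sub>1 c\<^sub>2) / 2\<close> and \<open>c = 1 + s\<^sub>1\<close>,
  \<open>s\<^sub>i = sqrt (1 + c\<^sub>i)\<close>.\<close>

definition U_plus :: "real \<Rightarrow> real \<Rightarrow> real \<Rightarrow> real \<Rightarrow> real" where
  "U_plus c1 c2 c3 x = riccati_line c1 c2 x
     + 2 * (1 - x) * euler_series 1 (riccati_hyp_coeff c1 c2 c3) ((1 + x) / 2)
         / euler_series 0 (riccati_hyp_coeff c1 c2 c3) ((1 + x) / 2)"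

lemma hyp_params_riccati:
  assumes "c1 \<ge> -1" "c2 \<ge> -1" "c3 > c3bar c1 c2"
  shows "hyp_params (1 + sqrt (1 + c1) + sqrt (1 + c2)) ((c3 - c3bar c1 c2) / 2) (1 + sqrt (1 + c1))"
  using assms by unfold_locales (auto intro: add_pos_nonneg)

lemma riccati_residual:
  fixes F A B z x s1 s2 r c3 :: real
  assumes "F \<noteq> 0" "z \<noteq> 0" "x = 2 * z - 1" "c3 = 2 * r - (s1 + s2) * (s1 + s2 + 2) / 2"
  defines "U \<equiv> (s1 - s2) - (2 + s1 + s2) * x + 4 * (1 - z) * A / F"
    and "D \<equiv> - (2 + s1 + s2) + 2 * ((1 - z) * (B * F - A ^ 2) / (z * F ^ 2) - A / F)"
  shows "(1 - x ^ 2) * D + 2 * x * U + U ^ 2 / 2 - Pc (s1 ^ 2 - 1) (s2 ^ 2 - 1) c3 x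
       = 8 * (1 - z) / F * ((1 - z) * B + s1 * A - (1 + s1 + s2) * z * A - r * z * F)"
  using assms(1,2) unfolding U_def D_def Pc_def assms(3,4) by (simp add: field_simps power2_eq_square)

lemma U_plus_has_derivative:
  assumes c1: "c1 \<ge> -1" and c2: "c2 \<ge> -1" and c3: "c3 > c3bar c1 c2" and x: "-1 < x" "x < 1"
  defines "s1 \<equiv> sqrt (1 + c1)" and "s2 \<equiv> sqrt (1 + c2)" and "z \<equiv> (1 + x) / 2"
    and "F \<equiv> euler_series 0 (riccati_hyp_coeff c1 c2 c3) ((1 + x) / 2)"
    and "A \<equiv> euler_series 1 (riccati_hyp_coeff c1 c2 c3) ((1 + x) / 2)"
    and "B \<equiv> euler_series 2 (riccati_hyp_coeff c1 c2 c3) ((1 + x) / 2)"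
  shows "(U_plus c1 c2 c3 has_real_derivative
           - (2 + s1 + s2) + 2 * ((1 - z) * (B * F - A ^ 2) / (z * F ^ 2) - A / F)) (at x)"
proof -
  interpret hyp_params "1 + s1 + s2" "(c3 - c3bar c1 c2) / 2" "1 + s1"
    unfolding s1_def s2_def by (rule hyp_params_riccati[OF c1 c2 c3])
  have g: "riccati_hyp_coeff c1 c2 c3 = hyp_coeff (1 + s1 + s2) ((c3 - c3bar c1 c2) / 2) (1 + s1)"
    by (simp add: riccati_hyp_coeff_def s1_def s2_def)
  have z: "0 < z" "z < 1" using x by (auto simp: z_def)
  obtain DF where DF: "(euler_series 0 (riccati_hyp_coeff c1 c2 c3) has_real_derivative DF) (at z)"
    "z * DF = A"
    using euler_series_hyp_coeff_has_derivative[of z 0] z unfolding g A_def z_def by auto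
  obtain DA where DA: "(euler_series 1 (riccati_hyp_coeff c1 c2 c3) has_real_derivative DA) (at z)"
    "z * DA = B"
    using euler_series_hyp_coeff_has_derivative[of z 1] z unfolding g B_def z_def
    by (auto simp: numeral_2_eq_2)
  have F: "F \<ge> 1" using hyp_ge_1 z unfolding F_def g z_def by auto
  have half: "((\<lambda>x. (1 + x) / 2) has_real_derivative 1 / 2) (at x)"
    by (auto intro!: derivative_eq_intros)
  note hF = DERIV_chain2[OF DF(1)[unfolded z_def] half]
    and hA = DERIV_chain2[OF DA(1)[unfolded z_def] half]
  have "(U_plus c1 c2 c3 has_real_derivative
      - (2 + s1 + s2) + ((- 2 * A + 2 * (1 - x) * (DA * (1 / 2))) * F - 2 * (1 - x) * A * (DF * (1 / 2)))
        / (F * F)) (at x)"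
    unfolding U_plus_def[abs_def] riccati_line_def s1_def[symmetric] s2_def[symmetric]
    by (rule derivative_eq_intros hF hA refl | use F in \<open>simp add: F_def A_def z_def\<close>)+
  moreover have "- (2 + s1 + s2) + ((- 2 * A + 2 * (1 - x) * (DA * (1 / 2))) * F
      - 2 * (1 - x) * A * (DF * (1 / 2))) / (F * F)
      = - (2 + s1 + s2) + 2 * ((1 - z) * (B * F - A ^ 2) / (z * F ^ 2) - A / F)"
  proof -
    have e: "DF = A / z" "DA = B / z" "x = 2 * z - 1" using DF(2) DA(2) z by (auto simp: field_simps z_def)
    show ?thesis unfolding e using F z by (simp add: field_simps power2_eq_square)
  qed
  ultimately show ?thesis by simp
qed

lemma U_plus_solves:
  assumes c1: "c1 \<ge> -1" and c2: "c2 \<ge> -1" and c3: "c3 > c3bar c1 c2"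
  shows "solves_on c1 c2 c3 (U_plus c1 c2 c3) {-1<..<1}"
  unfolding solves_on_def
proof
  fix x :: real assume x: "x \<in> {-1<..<1}"
  define s1 s2 r where "s1 = sqrt (1 + c1)" and "s2 = sqrt (1 + c2)" and "r = (c3 - c3bar c1 c2) / 2"
  define z where "z = (1 + x) / 2"
  define F A B where "F = euler_series 0 (riccati_hyp_coeff c1 c2 c3) z"
    and "A = euler_series 1 (riccati_hyp_coeff c1 c2 c3) z"
    and "B = euler_series 2 (riccati_hyp_coeff c1 c2 c3) z"
  define D where "D = - (2 + s1 + s2) + 2 * ((1 - z) * (B * F - A ^ 2) / (z * F ^ 2) - A / F)"
  interpret hyp_params "1 + s1 + s2" r "1 + s1"
    unfolding s1_def s2_def r_def by (rule hyp_params_riccati[OF assms])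
  have g: "riccati_hyp_coeff c1 c2 c3 = hyp_coeff (1 + s1 + s2) r (1 + s1)"
    by (simp add: riccati_hyp_coeff_def s1_def s2_def r_def)
  have z: "0 < z" "z < 1" using x by (auto simp: z_def)
  have F: "F \<ge> 1" using hyp_ge_1 z unfolding F_def g by auto
  have "(U_plus c1 c2 c3 has_real_derivative D) (at x)"
    using U_plus_has_derivative[OF c1 c2 c3, of x] x
    unfolding D_def s1_def s2_def z_def F_def A_def B_def by simp
  moreover have U: "U_plus c1 c2 c3 x = (s1 - s2) - (2 + s1 + s2) * x + 4 * (1 - z) * A / F"
  proof -
    have "4 * (1 - z) = 2 * (1 - x)" by (simp add: z_def field_simps)
    then show ?thesis
      unfolding U_plus_def riccati_line_def s1_def[symmetric] s2_def[symmetric]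
        z_def[symmetric] F_def[symmetric] A_def[symmetric] by simp
  qed
  moreover have "(1 - x ^ 2) * D + 2 * x * U_plus c1 c2 c3 x + (U_plus c1 c2 c3 x) ^ 2 / 2
      = Pc c1 c2 c3 x"
  proof -
    have "F \<noteq> 0" "z \<noteq> 0" "x = 2 * z - 1" "c3 = 2 * r - (s1 + s2) * (s1 + s2 + 2) / 2"
      using F z by (auto simp: z_def r_def c3bar_def s1_def s2_def field_simps)
    note residual = riccati_residual[OF this, where A = A and B = B]
    have "s1 ^ 2 - 1 = c1" "s2 ^ 2 - 1 = c2" using c1 c2 by (auto simp: s1_def s2_def)
    moreover have "(1 - z) * B + s1 * A - (1 + s1 + s2) * z * A - r * z * F = 0"
      using hypergeometric_equation[of z] z unfolding F_def A_def B_def g by (simp add: algebra_simps)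
    ultimately show ?thesis using residual unfolding D_def[symmetric] U[symmetric] by simp
  qed
  ultimately show "\<exists>D. (U_plus c1 c2 c3 has_real_derivative D) (at x) \<and>
      (1 - x ^ 2) * D + 2 * x * U_plus c1 c2 c3 x + (U_plus c1 c2 c3 x) ^ 2 / 2 = Pc c1 c2 c3 x"
    by auto
qed

lemma U_plus_gt_line:
  assumes c1: "c1 \<ge> -1" and c2: "c2 \<ge> -1" and c3: "c3 > c3bar c1 c2" and x: "-1 < x" "x < 1"
  shows "riccati_line c1 c2 x < U_plus c1 c2 c3 x"
proof -
  interpret hyp_params "1 + sqrt (1 + c1) + sqrt (1 + c2)" "(c3 - c3bar c1 c2) / 2" "1 + sqrt (1 + c1)"
    by (rule hyp_params_riccati[OF assms(1-3)])
  have "0 < (1 + x) / 2" "(1 + x) / 2 < 1" using x by auto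
  then have "0 < 2 * (1 - x) * euler_series 1 (riccati_hyp_coeff c1 c2 c3) ((1 + x) / 2)
      / euler_series 0 (riccati_hyp_coeff c1 c2 c3) ((1 + x) / 2)"
    using hyp_theta_pos hyp_ge_1 x unfolding riccati_hyp_coeff_def
    by (intro divide_pos_pos mult_pos_pos) (auto intro: less_le_trans[OF zero_less_one])
  then show ?thesis by (simp add: U_plus_def)
qed

lemma U_plus_tendsto_at_minus_1:
  assumes "c1 \<ge> -1" "c2 \<ge> -1" "c3 > c3bar c1 c2"
  shows "(U_plus c1 c2 c3 \<longlongrightarrow> tau2 c1) (at_right (-1))"
proof -
  interpret hyp_params "1 + sqrt (1 + c1) + sqrt (1 + c2)" "(c3 - c3bar c1 c2) / 2" "1 + sqrt (1 + c1)"
    by (rule hyp_params_riccati[OF assms])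
  have "isCont (euler_series k (riccati_hyp_coeff c1 c2 c3)) 0" for k
    using euler_series_hyp_coeff_has_derivative[of 0 k] unfolding riccati_hyp_coeff_def
    by (auto intro: DERIV_isCont)
  then have "isCont (\<lambda>x. euler_series k (riccati_hyp_coeff c1 c2 c3) ((1 + x) / 2)) (-1)" for k
    by (intro continuous_intros isCont_o2[of _ "\<lambda>x. (1 + x) / 2"]) auto
  then have "isCont (U_plus c1 c2 c3) (-1)"
    unfolding U_plus_def[abs_def] riccati_line_def
    by (intro continuous_intros) (auto simp: euler_series_at_0 riccati_hyp_coeff_def)
  moreover have "U_plus c1 c2 c3 (-1) = tau2 c1"
    using riccati_line_at_minus_1 by (simp add: U_plus_def euler_series_at_0 riccati_hyp_coeff_def)
  ultimately show ?thesis by (metis isCont_def filterlim_at_split)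
qed

lemma mean_above_line_lower_bound:
  assumes "c1 \<ge> -1" "-1 < y" "y \<le> 0"
    and "riccati_line c1 c2 y < v" "tau2 c1 - C * (1 + y) \<le> u"
  shows "2 * y + (v + u) / 2 \<ge> - max 0 ((C + (2 + sqrt (1 + c1) + sqrt (1 + c2))) / 2) * (1 - y ^ 2)"
proof -
  define K where "K = 2 + sqrt (1 + c1) + sqrt (1 + c2)"
  define M where "M = max 0 ((C + K) / 2)"
  have "riccati_line c1 c2 y = tau2 c1 - K * (1 + y)"
    by (simp add: riccati_line_def tau2_def K_def algebra_simps)
  moreover have "tau2 c1 \<ge> 2" using assms(1) by (simp add: tau2_def)
  ultimately have "2 * y + (v + u) / 2 \<ge> 2 * (1 + y) - (C + K) / 2 * (1 + y)"
    using assms(4,5) distrib_right[of "C / 2" "K / 2" "1 + y"] by (simp add: add_divide_distrib)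
  also have "2 * (1 + y) - (C + K) / 2 * (1 + y) \<ge> - M * (1 + y)"
  proof -
    have "(C + K) / 2 * (1 + y) \<le> M * (1 + y)" using assms(2) by (intro mult_right_mono) (auto simp: M_def)
    moreover have "0 \<le> 2 * (1 + y)" using assms(2) by simp
    ultimately show ?thesis unfolding mult_minus_left by linarith
  qed
  also have "- M * (1 + y) \<ge> - M * (1 - y ^ 2)"
  proof -
    have "(1 + y) * 1 \<le> (1 + y) * (1 - y)" using assms(2,3) by (intro mult_left_mono) auto
    then have "1 + y \<le> 1 - y ^ 2" by (simp add: power2_eq_square algebra_simps)
    then have "M * (1 + y) \<le> M * (1 - y ^ 2)" by (rule mult_left_mono) (simp add: M_def)
    then show ?thesis by simp
  qed
  finally show ?thesis by (simp add: M_def K_def)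
qed

lemma U_plus_eq_near_minus_1:
  assumes c1: "c1 \<ge> -1" and c2: "c2 \<ge> -1" and c3: "c3 > c3bar c1 c2"
    and e: "0 < e" "e \<le> 1" and sol: "solves_on c1 c2 c3 U {-1<..<-1+e}"
    and bound: "\<And>y. -1 < y \<Longrightarrow> y < -1 + e \<Longrightarrow> \<bar>U y - tau2 c1\<bar> \<le> C * (1 + y)"
    and y: "-1 < y" "y < -1 + e"
  shows "U_plus c1 c2 c3 y = U y"
proof -
  define V where "V = U_plus c1 c2 c3"
  define M where "M = max 0 ((C + (2 + sqrt (1 + c1) + sqrt (1 + c2))) / 2)"
  have U_bound: "tau2 c1 - C * (1 + y) \<le> U y \<and> U y \<le> tau2 c1 + C * (1 + y)"
    if "-1 < y" "y < -1 + e" for y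
    using bound[OF that] by (simp add: abs_diff_le_iff)
  have "V y = U y"
  proof (rule solves_on_unique_from_left[of "-1" "-1 + e" c1 c2 c3 V U M])
    show "solves_on c1 c2 c3 V {-1<..<-1 + e}"
      using e by (auto intro!: solves_on_subset[OF U_plus_solves[OF c1 c2 c3]] simp: V_def)
    have ev: "eventually (\<lambda>y. -1 < y \<and> y < -1 + e) (at_right (-1::real))"
      unfolding eventually_at_right_field using e by (intro exI[of _ "-1 + e"]) auto
    have "((\<lambda>y. tau2 c1 + s * C * (1 + y)) \<longlongrightarrow> tau2 c1 + s * C * (1 + -1)) (at_right (-1))"
      for s by (intro tendsto_intros)
    then have lim: "((\<lambda>y. tau2 c1 + s * C * (1 + y)) \<longlongrightarrow> tau2 c1) (at_right (-1))" for s
      by simp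
    have lo: "eventually (\<lambda>y. tau2 c1 + (-1) * C * (1 + y) \<le> U y) (at_right (-1))"
      using ev by (rule eventually_mono) (use U_bound in simp)
    have hi: "eventually (\<lambda>y. U y \<le> tau2 c1 + 1 * C * (1 + y)) (at_right (-1))"
      using ev by (rule eventually_mono) (use U_bound in simp)
    have "(U \<longlongrightarrow> tau2 c1) (at_right (-1))" by (rule tendsto_sandwich[OF lo hi lim lim])
    then have "((\<lambda>y. V y - U y) \<longlongrightarrow> tau2 c1 - tau2 c1) (at_right (-1))"
      unfolding V_def by (intro tendsto_diff U_plus_tendsto_at_minus_1[OF c1 c2 c3])
    then show "((\<lambda>y. V y - U y) \<longlongrightarrow> 0) (at_right (-1))" by simp
    fix y assume y: "-1 < y" "y < -1 + e"
    show "2 * y + (V y + U y) / 2 \<ge> - M * (1 - y ^ 2)"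
      unfolding M_def
    proof (rule mean_above_line_lower_bound[OF c1])
      show "riccati_line c1 c2 y < V y" unfolding V_def using U_plus_gt_line[OF c1 c2 c3, of y] y e by auto
      show "tau2 c1 - C * (1 + y) \<le> U y" using U_bound[OF y] by blast
    qed (use y e in auto)
  qed (use y e sol in simp_all)
  then show ?thesis by (simp add: V_def)
qed

lemma U_plus_agrees_with_series_solution:
  fixes a :: "nat \<Rightarrow> real"
  assumes c1: "c1 \<ge> -1" and c2: "c2 \<ge> -1" and c3: "c3 > c3bar c1 c2"
    and "\<delta> > 0" and a0: "a 0 = tau2 c1"
    and series: "\<forall>x\<in>{-1<..<-1+\<delta>}. (\<lambda>n. a n * (1 + x) ^ n) sums (U x)"
    and sol: "solves_on c1 c2 c3 U {-1<..<-1+\<delta>}"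
    and x: "-1 < x" "x < 1" "x < -1 + \<delta>"
  shows "U_plus c1 c2 c3 x = U x"
proof -
  have "(\<lambda>n. a n * t ^ n) sums U (t - 1)" if "0 < t" "t < \<delta>" for t
  proof -
    have "t - 1 \<in> {-1<..<-1+\<delta>}" using that by simp
    from series[rule_format, OF this] show ?thesis by simp
  qed
  then have "\<exists>\<epsilon>>0. \<exists>C. \<forall>t. 0 < t \<and> t < \<epsilon> \<longrightarrow> \<bar>U (t - 1) - a 0\<bar> \<le> C * t"
    by (rule power_series_linear_bound_at_0[OF \<open>\<delta> > 0\<close>])
  then obtain \<epsilon> C where "\<epsilon> > 0" and C: "\<And>t. 0 < t \<Longrightarrow> t < \<epsilon> \<Longrightarrow> \<bar>U (t - 1) - a 0\<bar> \<le> C * t"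
    by blast
  define e where "e = min (min \<epsilon> \<delta>) 1"
  have e: "0 < e" "e \<le> \<epsilon>" "e \<le> \<delta>" "e \<le> 1" using \<open>\<epsilon> > 0\<close> \<open>\<delta> > 0\<close> by (auto simp: e_def)
  have near: "U_plus c1 c2 c3 y = U y" if "-1 < y" "y < -1 + e" for y
  proof (rule U_plus_eq_near_minus_1[OF c1 c2 c3 e(1,4) _ _ that])
    show "solves_on c1 c2 c3 U {-1<..<-1 + e}" using e by (auto intro!: solves_on_subset[OF sol])
    show "\<bar>U y - tau2 c1\<bar> \<le> C * (1 + y)" if "-1 < y" "y < -1 + e" for y
      using C[of "1 + y"] that e a0 by simp
  qed
  show ?thesis
  proof (cases "x < -1 + e")
    case True
    then show ?thesis using near x by simp
  next
    case False
    define b where "b = (x + min 1 (-1 + \<delta>)) / 2"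
    have ab: "-1 < -1 + e / 2" "-1 + e / 2 < x" "x < b" "b < 1" "b < -1 + \<delta>"
      using x e False by (auto simp: b_def)
    show ?thesis
    proof (rule solves_on_unique_interior[of "-1 + e / 2" b c1 c2 c3 "U_plus c1 c2 c3" U x])
      show "solves_on c1 c2 c3 (U_plus c1 c2 c3) {-1 + e / 2..b}" "solves_on c1 c2 c3 U {-1 + e / 2..b}"
        using ab by (auto intro!: solves_on_subset[OF U_plus_solves[OF c1 c2 c3]] solves_on_subset[OF sol])
      show "U_plus c1 c2 c3 (-1 + e / 2) = U (-1 + e / 2)" using near e by simp
    qed (use ab in auto)
  qed
qed

lemma U_plus_not_tendsto_tau1':
  assumes c1: "c1 \<ge> -1" and c2: "c2 \<ge> -1" and c3: "c3 > c3bar c1 c2" and "sqrt (1 + c2) > 0"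
  shows "\<not> (U_plus c1 c2 c3 \<longlongrightarrow> tau1' c2) (at_left 1)"
proof
  assume lim: "(U_plus c1 c2 c3 \<longlongrightarrow> tau1' c2) (at_left 1)"
  define V where "V = U_plus c1 c2 c3"
  define L where "L = riccati_line c1 c2"
  define K where "K = 2 + sqrt (1 + c1) + sqrt (1 + c2)"
  define w where "w x = V x - L x" for x
  have V_sol: "solves_on c1 c2 c3 V {-1<..<1}" unfolding V_def by (rule U_plus_solves[OF c1 c2 c3])
  have w_pos: "w x > 0" if "-1 < x" "x < 1" for x
    unfolding w_def V_def L_def using U_plus_gt_line[OF c1 c2 c3] that by auto
  have "((\<lambda>t. 2 * t + (V t + L t) / 2) \<longlongrightarrow> 2 * 1 + (tau1' c2 + tau1' c2) / 2) (at_left 1)"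
    using lim riccati_line_tendsto_at_1 unfolding V_def L_def by (intro tendsto_intros) auto
  moreover have "2 * 1 + (tau1' c2 + tau1' c2) / 2 = - 2 * sqrt (1 + c2)"
    by (simp add: tau1'_def field_simps)
  then have "2 * 1 + (tau1' c2 + tau1' c2) / 2 < 0" using assms(4) by linarith
  ultimately have "eventually (\<lambda>t. 2 * t + (V t + L t) / 2 < 0) (at_left 1)" by (rule order_tendstoD)
  then obtain b where "b < 1" and b: "\<And>t. b < t \<Longrightarrow> t < 1 \<Longrightarrow> 2 * t + (V t + L t) / 2 < 0"
    unfolding eventually_at_left_field by blast
  define x0 where "x0 = (max b 0 + 1) / 2"
  have x0: "b < x0" "0 < x0" "x0 < 1" using \<open>b < 1\<close> by (auto simp: x0_def)
  have "\<not> (w \<longlongrightarrow> 0) (at_left 1)"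
  proof (rule deriv_nonneg_pos_not_tendsto_0[of x0 1 w "\<lambda>t. riccati_rhs c1 c2 c3 t (V t) / (1 - t ^ 2) + K"])
    show "x0 < 1" "w x0 > 0" using x0 w_pos by auto
    fix t assume t: "x0 \<le> t" "t < 1"
    then have "\<bar>t\<bar> < 1" using x0 by auto
    then show "(w has_real_derivative riccati_rhs c1 c2 c3 t (V t) / (1 - t ^ 2) + K) (at t)"
      unfolding w_def[abs_def] L_def riccati_line_def K_def
      by (auto intro!: derivative_eq_intros solves_on_has_derivative[OF V_sol])
  next
    fix t assume t: "x0 < t" "t < 1"
    then have "1 - t ^ 2 > 0" using x0 one_minus_square_bounds[of t] by auto
    have "w t * (2 * t + (V t + L t) / 2) < 0"
      using w_pos[of t] b[of t] t x0 by (intro mult_pos_neg) auto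
    moreover have "(c3 - c3bar c1 c2) * (1 - t ^ 2) > 0" using c3 \<open>1 - t ^ 2 > 0\<close> by simp
    ultimately have "riccati_rhs c1 c2 c3 t (V t) + (1 - t ^ 2) * K \<ge> 0"
      using riccati_rhs_above_line[OF c1 c2, of c3 t "V t"] unfolding w_def L_def K_def by linarith
    then show "riccati_rhs c1 c2 c3 t (V t) / (1 - t ^ 2) + K \<ge> 0"
      using \<open>1 - t ^ 2 > 0\<close> by (simp add: field_simps)
  qed
  moreover have "(w \<longlongrightarrow> tau1' c2 - tau1' c2) (at_left 1)"
    unfolding w_def V_def L_def by (intro tendsto_diff lim riccati_line_tendsto_at_1)
  ultimately show False by simp
qed

lemma U_plus_tendsto_at_1:
  assumes c1: "c1 \<ge> -1" and c2: "c2 \<ge> -1" and c3: "c3 > c3bar c1 c2"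
  shows "(U_plus c1 c2 c3 \<longlongrightarrow> tau2' c2) (at_left 1)"
proof -
  define V where "V = U_plus c1 c2 c3"
  define L where "L = riccati_line c1 c2"
  have V_sol: "solves_on c1 c2 c3 V {-1<..<1}" unfolding V_def by (rule U_plus_solves[OF c1 c2 c3])
  have L_less: "L x < V x" if "-1 < x" "x < 1" for x
    unfolding V_def L_def using U_plus_gt_line[OF c1 c2 c3] that by auto
  obtain M where M: "\<And>y. 0 < y \<Longrightarrow> y < 1 \<Longrightarrow> V y < M"
    using solves_on_bounded_above[OF V_sol, of 0] by auto
  have "tau1' c2 \<le> V y" if "0 < y" "y < 1" for y
  proof -
    have "L y = tau1' c2 + (2 + sqrt (1 + c1) + sqrt (1 + c2)) * (1 - y)"
      by (simp add: L_def riccati_line_def tau1'_def algebra_simps)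
    then have "tau1' c2 \<le> L y" using that c1 c2 by simp
    then show ?thesis using L_less[of y] that by simp
  qed
  then obtain l where lim: "(V \<longlongrightarrow> l) (at_left 1)" and l: "l = tau1' c2 \<or> l = tau2' c2"
    using riccati_tendsto_root_at_1[OF c2 _ _ solves_on_subset[OF V_sol], of 0 "tau1' c2" M] M
    by (force simp: less_imp_le)
  show ?thesis
  proof (cases "l = tau2' c2 \<or> sqrt (1 + c2) = 0")
    case True
    with lim l show ?thesis by (auto simp: V_def tau1'_def tau2'_def)
  next
    case False
    then have "l = tau1' c2" "sqrt (1 + c2) > 0" using l c2 by auto
    then show ?thesis using U_plus_not_tendsto_tau1'[OF c1 c2 c3] lim unfolding V_def by blast
  qed
qed

definition U_minus :: "real \<Rightarrow> real \<Rightarrow> real \<Rightarrow> real \<Rightarrow> real" where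
  "U_minus c1 c2 c3 x = - U_plus c2 c1 c3 (- x)"

lemma c3bar_commute: "c3bar c2 c1 = c3bar c1 c2"
  by (simp add: c3bar_def add.commute)

lemma U_minus_solves:
  assumes "c1 \<ge> -1" "c2 \<ge> -1" "c3 > c3bar c1 c2"
  shows "solves_on c1 c2 c3 (U_minus c1 c2 c3) {-1<..<1}"
  unfolding U_minus_def[abs_def]
  by (rule solves_on_reflect[OF U_plus_solves]) (use assms in \<open>auto simp: c3bar_commute\<close>)

lemma U_minus_less_line:
  assumes "c1 \<ge> -1" "c2 \<ge> -1" "c3 > c3bar c1 c2" "-1 < x" "x < 1"
  shows "U_minus c1 c2 c3 x < riccati_line c1 c2 x"
  using U_plus_gt_line[of c2 c1 c3 "- x"] assms riccati_line_reflect[of c2 c1 x]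
  by (simp add: U_minus_def c3bar_commute)

lemma U_minus_tendsto_at_minus_1:
  assumes "c1 \<ge> -1" "c2 \<ge> -1" "c3 > c3bar c1 c2"
  shows "(U_minus c1 c2 c3 \<longlongrightarrow> tau1 c1) (at_right (-1))"
proof -
  have "((\<lambda>x. - U_plus c2 c1 c3 x) \<longlongrightarrow> - tau2' c1) (at_left 1)"
    using assms by (intro tendsto_minus U_plus_tendsto_at_1) (auto simp: c3bar_commute)
  then have "filterlim (U_minus c1 c2 c3) (nhds (tau1 c1)) (filtermap uminus (at_left 1))"
    by (simp add: filterlim_filtermap U_minus_def tau1_def tau2'_def)
  then show ?thesis by (simp add: at_right_minus)
qed

lemma U_minus_agrees_with_series_solution:
  fixes b :: "nat \<Rightarrow> real"
  assumes c1: "c1 \<ge> -1" and c2: "c2 \<ge> -1" and c3: "c3 > c3bar c1 c2"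
    and "\<delta> > 0" and b0: "b 0 = tau1' c2"
    and series: "\<forall>x\<in>{1-\<delta><..<1}. (\<lambda>n. b n * (1 - x) ^ n) sums (U x)"
    and sol: "solves_on c1 c2 c3 U {1-\<delta><..<1}"
    and x: "-1 < x" "x < 1" "1 - \<delta> < x"
  shows "U_minus c1 c2 c3 x = U x"
proof -
  have "U_plus c2 c1 c3 (- x) = - U (- (- x))"
  proof (rule U_plus_agrees_with_series_solution[where a = "\<lambda>n. - b n"])
    show "\<forall>y\<in>{-1<..<-1+\<delta>}. (\<lambda>n. - b n * (1 + y) ^ n) sums (- U (- y))"
    proof
      fix y assume "y \<in> {-1<..<-1+\<delta>}"
      then have "- y \<in> {1-\<delta><..<1}" by auto
      from sums_minus[OF series[rule_format, OF this]]
      show "(\<lambda>n. - b n * (1 + y) ^ n) sums (- U (- y))" by simp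
    qed
    show "solves_on c2 c1 c3 (\<lambda>y. - U (- y)) {-1<..<-1+\<delta>}"
      by (rule solves_on_reflect[OF sol]) auto
  qed (use assms in \<open>auto simp: c3bar_commute tau2_def tau1'_def\<close>)
  then show ?thesis by (simp add: U_minus_def)
qed

theorem lemma2p7:
  fixes c1 c2 c3 \<delta>p \<delta>m :: real and Up Um :: "real \<Rightarrow> real" and a b :: "nat \<Rightarrow> real"
  assumes c1: "c1 \<ge> -1" and c2: "c2 \<ge> -1" and c3: "c3 > c3bar c1 c2"
    and dp: "\<delta>p > 0"
    and a0: "a 0 = tau2 c1"
    and Up_series: "\<forall>x\<in>{-1<..<-1+\<delta>p}. (\<lambda>n. a n * (1 + x)^n) sums (Up x)"
    and Up_sol: "solves_on c1 c2 c3 Up {-1<..<-1+\<delta>p}"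
    and dm: "\<delta>m > 0"
    and b0: "b 0 = tau1' c2"
    and Um_series: "\<forall>x\<in>{1-\<delta>m<..<1}. (\<lambda>n. b n * (1 - x)^n) sums (Um x)"
    and Um_sol: "solves_on c1 c2 c3 Um {1-\<delta>m<..<1}"
  shows "\<exists>Vp Vm.
           solves_on c1 c2 c3 Vp {-1<..<1} \<and>
           (\<forall>x\<in>{-1<..<-1+\<delta>p} \<inter> {-1<..<1}. Vp x = Up x) \<and>
           (Vp \<longlongrightarrow> tau2' c2) (at_left 1) \<and>
           solves_on c1 c2 c3 Vm {-1<..<1} \<and>
           (\<forall>x\<in>{1-\<delta>m<..<1} \<inter> {-1<..<1}. Vm x = Um x) \<and>
           (Vm \<longlongrightarrow> tau1 c1) (at_right (-1)) \<and>
           (\<forall>x\<in>{-1<..<1}. Vm x < Vp x)"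
proof (intro exI conjI ballI)
  show "solves_on c1 c2 c3 (U_plus c1 c2 c3) {-1<..<1}" by (rule U_plus_solves[OF c1 c2 c3])
  show "(U_plus c1 c2 c3 \<longlongrightarrow> tau2' c2) (at_left 1)" by (rule U_plus_tendsto_at_1[OF c1 c2 c3])
  show "solves_on c1 c2 c3 (U_minus c1 c2 c3) {-1<..<1}" by (rule U_minus_solves[OF c1 c2 c3])
  show "(U_minus c1 c2 c3 \<longlongrightarrow> tau1 c1) (at_right (-1))" by (rule U_minus_tendsto_at_minus_1[OF c1 c2 c3])
  fix x
  show "x \<in> {-1<..<-1+\<delta>p} \<inter> {-1<..<1} \<Longrightarrow> U_plus c1 c2 c3 x = Up x"
    using U_plus_agrees_with_series_solution[OF c1 c2 c3 dp a0 Up_series Up_sol] by auto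
  show "x \<in> {1-\<delta>m<..<1} \<inter> {-1<..<1} \<Longrightarrow> U_minus c1 c2 c3 x = Um x"
    using U_minus_agrees_with_series_solution[OF c1 c2 c3 dm b0 Um_series Um_sol] by auto
  show "x \<in> {-1<..<1} \<Longrightarrow> U_minus c1 c2 c3 x < U_plus c1 c2 c3 x"
    using U_minus_less_line[OF c1 c2 c3] U_plus_gt_line[OF c1 c2 c3] by (fastforce intro: less_trans)
qed

end
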